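(* Let $p$ be a Fermat prime, i.e. a prime of the form $p = 2^{m}+1$ with $m$ a positive integer. Then for every positive integer $k$, \[ \sum_{i=1}^{K(p^k)} \phi^{i}(p^k) \;=\; \phi(p^k) + \phi(\phi(p^k)) + \phi(\phi(\phi(p^k))) + \cdots + \phi(2) \;=\; \frac{2}{p+1}\left[p^k(p-1) + 2\left(\frac{p-1}{2}\right)^k\right] - 1 . \]
   Context: $\phi$ denotes Euler's totient function: $\phi(n)$ is the number of integers $x$ with $1\le x\le n$ and $\gcd(x,n)=1$ (so $\phi(1)=\phi(2)=1$). For $i\ge 1$, $\phi^{i}$ denotes the $i$-fold iterate $\phi\circ\cdots\circ\phi$. For an integer $n\ge 2$, $K(n)$ denotes the least positive integer $j$ with $\phi^{j}(n)=1$; the sum $\phi(n)+\phi(\phi(n))+\cdots+\phi(2)$ means $\sum_{i=1}^{K(n)}\phi^i(n)$, i.e. the iteration is summed up to and including the first iterate equal to $1$ (which for $n\ge 3$ is the term $\phi(2)$). *)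

theory Defs
  imports "HOL-Number_Theory.Number_Theory"
begin

definition totient_K :: "nat \<Rightarrow> nat" where
  "totient_K n = (LEAST j. 0 < j \<and> (totient ^^ j) n = 1)"

end

theory Submission
  imports Defs
begin

text \<open>Write \<open>p = 2^(n+1) + 1\<close>. As \<open>p\<close> is odd, \<open>\<phi>(p^e 2^(c+1)) = \<phi>(p^e) 2^c\<close>, so each of
  the first \<open>k\<close> iterates of \<open>\<phi>\<close> at \<open>p^k\<close> trades one factor \<open>p\<close> for \<open>n\<close> factors \<open>2\<close>:
  \<open>\<phi>\<^sup>i(p^k) = p^(k-i) 2^(i n + 1)\<close>. What remains is the power of two \<open>2^(k n + 1)\<close>, which
  \<open>\<phi>\<close> halves down to \<open>1\<close>; no earlier iterate is \<open>1\<close>, so \<open>K(p^k) = k + k n + 1\<close>. With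
  \<open>r = 2^n = (p-1)/2\<close> the sum is \<open>2 \<Sum>\<^sub>i\<^sub>=\<^sub>1\<^sup>k p^(k-i) r^i + 2 r^k - 1\<close>, and the identity
  \<open>(p - r) \<Sum>\<^sub>i\<^sub>=\<^sub>1\<^sup>k p^(k-i) r^i = r (p^k - r^k)\<close> with \<open>p - r = r + 1\<close> gives the closed form.\<close>

lemma power_diff_eq_sum_atLeast1:
  fixes x y :: "'a::comm_ring_1"
  shows "y * (x ^ k - y ^ k) = (x - y) * (\<Sum>i = 1..k. x ^ (k - i) * y ^ i)"
proof -
  define S where "S = (\<Sum>i<k. x ^ (k - Suc i) * y ^ i)"
  have "(\<Sum>i = 1..k. x ^ (k - i) * y ^ i) = (\<Sum>i<k. x ^ (k - Suc i) * y ^ Suc i)"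
    by (rule sum.reindex_bij_witness[of _ Suc "\<lambda>i. i - 1"]) auto
  also have "\<dots> = y * S"
    by (simp add: S_def sum_distrib_left mult_ac)
  finally have "(x - y) * (\<Sum>i = 1..k. x ^ (k - i) * y ^ i) = y * ((x - y) * S)"
    by (simp add: mult_ac)
  also have "(x - y) * S = - ((y - x) * S)"
    by (simp add: algebra_simps)
  also have "(y - x) * S = y ^ k - x ^ k"
    unfolding S_def by (rule power_diff_sumr2[symmetric])
  finally show ?thesis by simp
qed

lemma totient_power_two:
  assumes "0 < c"
  shows "totient ((2::nat) ^ c) = 2 ^ (c - 1)"
  using totient_prime_power[OF two_is_prime_nat assms] by simp

lemma funpow_totient_power_two:
  assumes "j \<le> c"
  shows "(totient ^^ j) ((2::nat) ^ c) = 2 ^ (c - j)"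
  using assms
proof (induction j)
  case (Suc j)
  then have "(totient ^^ Suc j) (2 ^ c) = totient (2 ^ (c - j))" by simp
  also have "\<dots> = 2 ^ (c - Suc j)" using Suc.prems by (simp add: totient_power_two)
  finally show ?case .
qed simp

lemma totient_odd_mult_power_two:
  assumes "odd a"
  shows "totient (a * 2 ^ Suc c) = totient a * 2 ^ c"
proof -
  have "coprime a (2 ^ Suc c)" using assms by simp
  then have "totient (a * 2 ^ Suc c) = totient a * totient (2 ^ Suc c)"
    by (rule totient_mult_coprime)
  then show ?thesis using totient_power_two[of "Suc c"] by simp
qed

lemma funpow_totient_Fermat_prime_power:
  assumes "prime p" "p = 2 ^ Suc n + 1" "1 \<le> i" "i \<le> k"
  shows "(totient ^^ i) (p ^ k) = p ^ (k - i) * 2 ^ (i * n + 1)"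
  using assms(3,4)
proof (induction i rule: nat_induct_at_least)
  case base
  then show ?case using totient_prime_power[OF \<open>prime p\<close>, of k] assms(2) by simp
next
  case (Suc i)
  have "odd (p ^ (k - i))" using assms(2) by simp
  have "(totient ^^ Suc i) (p ^ k) = totient (p ^ (k - i) * 2 ^ Suc (i * n))"
    using Suc by simp
  also have "\<dots> = totient (p ^ (k - i)) * 2 ^ (i * n)"
    using \<open>odd (p ^ (k - i))\<close> by (rule totient_odd_mult_power_two)
  also have "totient (p ^ (k - i)) = p ^ (k - Suc i) * 2 ^ Suc n"
    using totient_prime_power[OF \<open>prime p\<close>, of "k - i"] Suc.prems assms(2) by simp
  finally show ?case by (simp add: power_add mult.assoc)
qed

lemma funpow_totient_Fermat_prime_power_tail:
  assumes "prime p" "p = 2 ^ Suc n + 1" "0 < k" "j \<le> k * n + 1"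
  shows "(totient ^^ (k + j)) (p ^ k) = 2 ^ (k * n + 1 - j)"
proof -
  have "(totient ^^ k) (p ^ k) = 2 ^ (k * n + 1)"
    using funpow_totient_Fermat_prime_power[OF assms(1,2), of k k] assms(3) by simp
  moreover have "(totient ^^ (k + j)) (p ^ k) = (totient ^^ j) ((totient ^^ k) (p ^ k))"
    by (simp only: add.commute[of k j] funpow_add comp_apply)
  ultimately show ?thesis
    using funpow_totient_power_two[OF assms(4)] by simp
qed

lemma totient_K_eqI:
  assumes "0 < K" "(totient ^^ K) x = 1" "\<And>j. 0 < j \<Longrightarrow> j < K \<Longrightarrow> (totient ^^ j) x \<noteq> 1"
  shows "totient_K x = K"
  unfolding totient_K_def
  by (rule Least_equality) (use assms not_less in blast)+

lemma totient_K_Fermat_prime_power: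
  assumes "prime p" "p = 2 ^ Suc n + 1" "0 < k"
  shows "totient_K (p ^ k) = k + (k * n + 1)"
proof (rule totient_K_eqI)
  show "(totient ^^ (k + (k * n + 1))) (p ^ k) = 1"
    using funpow_totient_Fermat_prime_power_tail[OF assms, of "k * n + 1"] by simp
next
  fix j assume "0 < j" "j < k + (k * n + 1)"
  show "(totient ^^ j) (p ^ k) \<noteq> 1"
  proof (cases "j \<le> k")
    case True
    then show ?thesis
      using funpow_totient_Fermat_prime_power[OF assms(1,2), of j k] \<open>0 < j\<close> by simp
  next
    case False
    define d where "d = j - k"
    have "j = k + d" "0 < d" "d < k * n + 1"
      using False \<open>j < k + (k * n + 1)\<close> unfolding d_def by simp_all
    then show ?thesis
      using funpow_totient_Fermat_prime_power_tail[OF assms, of d] by simp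
  qed
qed simp

lemma sum_funpow_totient_Fermat_prime_power:
  assumes "prime p" "p = 2 ^ Suc n + 1" "0 < k"
  shows "(\<Sum>i = 1..totient_K (p ^ k). (totient ^^ i) (p ^ k)) + 1
         = (\<Sum>i = 1..k. p ^ (k - i) * 2 ^ (i * n + 1)) + 2 ^ (k * n + 1)"
proof -
  define B where "B = k * n + 1"
  have "(\<Sum>i = 1..k + B. (totient ^^ i) (p ^ k))
        = (\<Sum>i = 1..k. (totient ^^ i) (p ^ k)) + (\<Sum>i = k + 1..k + B. (totient ^^ i) (p ^ k))"
    by (rule sum.ub_add_nat) simp
  also have "(\<Sum>i = 1..k. (totient ^^ i) (p ^ k)) = (\<Sum>i = 1..k. p ^ (k - i) * 2 ^ (i * n + 1))"
    using funpow_totient_Fermat_prime_power[OF assms(1,2)] by (intro sum.cong) simp_all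
  also have "(\<Sum>i = k + 1..k + B. (totient ^^ i) (p ^ k)) = (\<Sum>j = 1..B. (totient ^^ (j + k)) (p ^ k))"
    using sum.shift_bounds_cl_nat_ivl[of _ 1 k B] by (simp add: add.commute)
  also have "\<dots> = (\<Sum>j = 1..B. 2 ^ (B - j))"
    using funpow_totient_Fermat_prime_power_tail[OF assms]
    by (intro sum.cong) (simp_all add: B_def add.commute[of _ k])
  also have "\<dots> = (\<Sum>j<B. 2 ^ j)"
    by (rule sum.reindex_bij_witness[of _ "\<lambda>j. B - j" "\<lambda>j. B - j"]) auto
  also have "(\<Sum>j<B. (2::nat) ^ j) = 2 ^ B - 1"
    using sum_power2[of B] by (simp add: atLeast0LessThan)
  finally show ?thesis
    using totient_K_Fermat_prime_power[OF assms] by (simp add: B_def)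
qed

theorem theorem4p8:
  fixes p m k :: nat
  assumes "prime p" and "0 < m" and "p = 2 ^ m + 1" and "0 < k"
  shows "real (\<Sum>i = 1..totient_K (p ^ k). (totient ^^ i) (p ^ k))
         = 2 / (real p + 1) * (real p ^ k * (real p - 1) + 2 * ((real p - 1) / 2) ^ k) - 1"
proof -
  obtain n where "m = Suc n" using \<open>0 < m\<close> by (cases m) auto
  with assms have p: "p = 2 ^ Suc n + 1" by simp
  define r :: real where "r = 2 ^ n"
  define G where "G = (\<Sum>i = 1..k. real p ^ (k - i) * r ^ i)"
  have "0 < r" by (simp add: r_def)
  have p_r: "real p = 2 * r + 1" using p by (simp add: r_def)
  have "real (\<Sum>i = 1..totient_K (p ^ k). (totient ^^ i) (p ^ k)) + 1 = 2 * G + 2 * r ^ k"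
    using arg_cong[OF sum_funpow_totient_Fermat_prime_power[OF \<open>prime p\<close> p \<open>0 < k\<close>], of real]
    by (simp add: G_def r_def power_add power_mult[symmetric] sum_distrib_left mult_ac)
  also have "2 * G = 2 * r * (real p ^ k - r ^ k) / (r + 1)"
    using power_diff_eq_sum_atLeast1[of r "real p" k] \<open>0 < r\<close> p_r
    by (simp add: G_def field_simps)
  finally show ?thesis
    using \<open>0 < r\<close> p_r by (simp add: field_simps)
qed

end
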